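(* Let $(\sigma'_1,\sigma'_2)$ be any pair of maps satisfying conditions (1)–(6) below, let $t$ be a well-formed tree over $\tilde A_{i,k}$ and $P$ a player with $\sigma'_P(t)<_{lex}\infty$. Then there exists a $\sigma'$-optimal strategy of $P$ in $\mathcal G(t)$.
   Context: Fix natural numbers $i<k$. Trees over a ranked alphabet are partial maps $t:\omega^*\to A$ with non-empty prefix-closed domain where a node with an $m$-ary label has exactly the children $u0,\ldots,u(m-1)$; $t{\upharpoonright}u$ is the subtree at $u$. The alphabet $\tilde A_{i,k}$ has unary letters $p_i,\ldots,p_k$, a unary letter $\sim$, and binary letters $c_1,c_2$. Players $1,2$; $\bar P$ the opponent. Well-formed: no branch has infinitely many $\sim$. A node $u$ is switched if an odd number of strict prefixes $w\prec u$ have $t(w)=\sim$, kept otherwise. The game $\mathcal G(t)$: positions are nodes, moves to children, start at the root; $u$ is controlled by $P$ iff ($u$ kept and $t(u)=c_P$) or ($u$ switched and $t(u)=c_{\bar P}$). Winning plays: player 1 wins an infinite play iff it is (eventually) kept and the least $j$ with infinitely many nodes labelled $p_j$ is even, or (eventually) switched and this $j$ is odd (take $j=k$ if none occurs infinitely often). A strategy of $P$ is a set $\Sigma\subseteq\mathrm{dom}(t)$ containing the root, prefix-closed, where each $u\in\Sigma$ controlled by $P$ has exactly one child in $\Sigma$ and each other $u\in\Sigma$ has all children in $\Sigma$. $P$-losing numbers: $j\in\{i,\ldots,k\}$ odd for $P=1$, even for $P=2$; others are $P$-winning; $i',k'$ least/largest $P$-losing. A $P$-signature is $\infty$ or a tuple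 $(\theta_{i'},\theta_{i'+2},\ldots,\theta_{k'})$ of countable ordinals, ordered lexicographically (smaller index more significant), $\infty$ largest. The pair $(\sigma'_1,\sigma'_2)$ satisfies, for all $P$, well-formed $t,t_L,t_R$, $j\in\{i..k\}$: (1) $\sigma'_P(t)=\infty$ iff $P$ does not win $\mathcal G(t)$; (2) $\sigma'_P(\sim(t))=(0,\ldots,0)$ if $P$ wins $\mathcal G(\sim(t))$; (3) if $\sigma'_P(t)=(\theta_{i'},\ldots,\theta_{k'})$ and $j$ is $P$-winning then $\sigma'_P(p_j(t))=(\theta_{i'},\ldots,\theta_{j-1},0,\ldots,0)$; (4) if $j$ is $P$-losing then $\sigma'_P(p_j(t))=(\theta_{i'},\ldots,\theta_{j-2},\theta_j+1,0,\ldots,0)$; (5) $\sigma'_P(c_P(t_L,t_R))=\min\{\sigma'_P(t_L),\sigma'_P(t_R)\}$; (6) $\sigma'_P(c_{\bar P}(t_L,t_R))=\max\{\sigma'_P(t_L),\sigma'_P(t_R)\}$. A strategy $\Sigma$ of $P$ is $\sigma'$-optimal if for each $u\in\Sigma$ controlled by $P$, writing $t{\upharpoonright}u=c_Q(t_L,t_R)$ ($Q=P$ if $u$ kept, $Q=\bar P$ if switched), $\Sigma$ contains $u0$ only if $\sigma'_Q(t_L)\le_{lex}\sigma'_Q(t_R)$ and $u1$ only if $\sigma'_Q(t_L)\ge_{lex}\sigma'_Q(t_R)$. *)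

theory Defs
  imports Main "HOL-Library.Sublist" "HOL-Library.Countable_Set"
begin

datatype player = Pl1 | Pl2

fun opp :: "player \<Rightarrow> player" where
  "opp Pl1 = Pl2" | "opp Pl2 = Pl1"

datatype lab = Pj nat | Sw | Cp player

fun arity :: "lab \<Rightarrow> nat" where
  "arity (Pj j) = 1" | "arity Sw = 1" | "arity (Cp Q) = 2"

type_synonym tree = "nat list \<Rightarrow> lab option"

definition in_alph :: "nat \<Rightarrow> nat \<Rightarrow> lab \<Rightarrow> bool" where
  "in_alph i k a = (case a of Pj j \<Rightarrow> i \<le> j \<and> j \<le> k | _ \<Rightarrow> True)"

definition is_tree :: "nat \<Rightarrow> nat \<Rightarrow> tree \<Rightarrow> bool" where
  "is_tree i k t \<longleftrightarrow>
     t [] \<noteq> None \<and>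
     (\<forall>u v. t (u @ v) \<noteq> None \<longrightarrow> t u \<noteq> None) \<and>
     (\<forall>u a. t u = Some a \<longrightarrow> in_alph i k a \<and> (\<forall>n. t (u @ [n]) \<noteq> None \<longleftrightarrow> n < arity a))"

definition bnode :: "(nat \<Rightarrow> nat) \<Rightarrow> nat \<Rightarrow> nat list" where
  "bnode d n = map d [0..<n]"

definition is_branch :: "tree \<Rightarrow> (nat \<Rightarrow> nat) \<Rightarrow> bool" where
  "is_branch t d \<longleftrightarrow> (\<forall>n. t (bnode d n) \<noteq> None)"

definition well_formed :: "nat \<Rightarrow> nat \<Rightarrow> tree \<Rightarrow> bool" where
  "well_formed i k t \<longleftrightarrow> is_tree i k t \<and>
     (\<forall>d. is_branch t d \<longrightarrow> finite {n. t (bnode d n) = Some Sw})"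

definition subtree :: "tree \<Rightarrow> nat list \<Rightarrow> tree" where
  "subtree t u = (\<lambda>w. t (u @ w))"

definition unary :: "lab \<Rightarrow> tree \<Rightarrow> tree" where
  "unary a t = (\<lambda>u. case u of [] \<Rightarrow> Some a | n # w \<Rightarrow> (if n = 0 then t w else None))"

definition binary :: "lab \<Rightarrow> tree \<Rightarrow> tree \<Rightarrow> tree" where
  "binary a tL tR = (\<lambda>u. case u of [] \<Rightarrow> Some a
      | n # w \<Rightarrow> (if n = 0 then tL w else if n = 1 then tR w else None))"

definition switched :: "tree \<Rightarrow> nat list \<Rightarrow> bool" where
  "switched t u \<longleftrightarrow> odd (card {w. strict_prefix w u \<and> t w = Some Sw})"

definition controlled :: "tree \<Rightarrow> player \<Rightarrow> nat list \<Rightarrow> bool" where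
  "controlled t P u \<longleftrightarrow>
     (\<not> switched t u \<and> t u = Some (Cp P)) \<or> (switched t u \<and> t u = Some (Cp (opp P)))"

definition inf_prio :: "nat \<Rightarrow> tree \<Rightarrow> (nat \<Rightarrow> nat) \<Rightarrow> nat" where
  "inf_prio k t d = (if \<exists>j. infinite {n. t (bnode d n) = Some (Pj j)}
                     then (LEAST j. infinite {n. t (bnode d n) = Some (Pj j)}) else k)"

definition wins_play1 :: "nat \<Rightarrow> tree \<Rightarrow> (nat \<Rightarrow> nat) \<Rightarrow> bool" where
  "wins_play1 k t d \<longleftrightarrow>
     ((\<exists>N. \<forall>n\<ge>N. \<not> switched t (bnode d n)) \<and> even (inf_prio k t d)) \<or>
     ((\<exists>N. \<forall>n\<ge>N. switched t (bnode d n)) \<and> odd (inf_prio k t d))"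

definition wins_play :: "nat \<Rightarrow> tree \<Rightarrow> player \<Rightarrow> (nat \<Rightarrow> nat) \<Rightarrow> bool" where
  "wins_play k t P d = (if P = Pl1 then wins_play1 k t d else \<not> wins_play1 k t d)"

definition is_strategy :: "tree \<Rightarrow> player \<Rightarrow> nat list set \<Rightarrow> bool" where
  "is_strategy t P S \<longleftrightarrow>
     S \<subseteq> {u. t u \<noteq> None} \<and> [] \<in> S \<and>
     (\<forall>u v. u @ v \<in> S \<longrightarrow> u \<in> S) \<and>
     (\<forall>u\<in>S. controlled t P u \<longrightarrow> (\<exists>!n. t (u @ [n]) \<noteq> None \<and> u @ [n] \<in> S)) \<and>
     (\<forall>u\<in>S. \<not> controlled t P u \<longrightarrow> (\<forall>n. t (u @ [n]) \<noteq> None \<longrightarrow> u @ [n] \<in> S))"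

definition wins :: "nat \<Rightarrow> tree \<Rightarrow> player \<Rightarrow> bool" where
  "wins k t P \<longleftrightarrow> (\<exists>S. is_strategy t P S \<and>
     (\<forall>d. (\<forall>n. bnode d n \<in> S) \<longrightarrow> wins_play k t P d))"

definition losing :: "nat \<Rightarrow> nat \<Rightarrow> player \<Rightarrow> nat \<Rightarrow> bool" where
  "losing i k P j \<longleftrightarrow> i \<le> j \<and> j \<le> k \<and> (if P = Pl1 then odd j else even j)"

text \<open>The P-losing numbers i', i'+2, ..., k' in increasing order; a finite P-signature is a
  list of ordinals indexed (positionwise) by this list.\<close>
definition lose_idx :: "nat \<Rightarrow> nat \<Rightarrow> player \<Rightarrow> nat list" where
  "lose_idx i k P = filter (losing i k P) [i..<Suc k]"

datatype 'o sig = Fin "'o list" | Infty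

text \<open>Ordinals: a wellorder type; the zero ordinal and the successor.\<close>
definition ozero :: "'o::wellorder" where
  "ozero = (LEAST x. True)"

definition osuc :: "'o::wellorder \<Rightarrow> 'o" where
  "osuc x = (LEAST y. x < y)"

definition lex_less :: "'o::linorder list \<Rightarrow> 'o list \<Rightarrow> bool" where
  "lex_less a b \<longleftrightarrow> (\<exists>n < length a. n < length b \<and> take n a = take n b \<and> a ! n < b ! n)"

fun sig_le :: "'o::linorder sig \<Rightarrow> 'o sig \<Rightarrow> bool" where
  "sig_le (Fin a) (Fin b) \<longleftrightarrow> a = b \<or> lex_less a b"
| "sig_le _ Infty \<longleftrightarrow> True"
| "sig_le Infty (Fin b) \<longleftrightarrow> False"

definition sig_min :: "'o::linorder sig \<Rightarrow> 'o sig \<Rightarrow> 'o sig" where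
  "sig_min x y = (if sig_le x y then x else y)"

definition sig_max :: "'o::linorder sig \<Rightarrow> 'o sig \<Rightarrow> 'o sig" where
  "sig_max x y = (if sig_le x y then y else x)"

definition sig_win_upd :: "nat \<Rightarrow> nat \<Rightarrow> player \<Rightarrow> nat \<Rightarrow> 'o::wellorder list \<Rightarrow> 'o list" where
  "sig_win_upd i k P j th = map (\<lambda>(l, x). if l < j then x else ozero) (zip (lose_idx i k P) th)"

definition sig_lose_upd :: "nat \<Rightarrow> nat \<Rightarrow> player \<Rightarrow> nat \<Rightarrow> 'o::wellorder list \<Rightarrow> 'o list" where
  "sig_lose_upd i k P j th = map (\<lambda>(l, x). if l < j then x else if l = j then osuc x else ozero)
      (zip (lose_idx i k P) th)"

text \<open>The pair (sigma'_1, sigma'_2), as sigma P, satisfies conditions (1)--(6); values of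
  sigma P on well-formed trees are P-signatures (tuples of the right length).\<close>
definition sig_conditions :: "nat \<Rightarrow> nat \<Rightarrow> (player \<Rightarrow> tree \<Rightarrow> 'o::wellorder sig) \<Rightarrow> bool" where
  "sig_conditions i k \<sigma> \<longleftrightarrow>
    (\<forall>P t th. well_formed i k t \<longrightarrow> \<sigma> P t = Fin th \<longrightarrow> length th = length (lose_idx i k P)) \<and>
    (\<forall>P t. well_formed i k t \<longrightarrow> (\<sigma> P t = Infty \<longleftrightarrow> \<not> wins k t P)) \<and>
    (\<forall>P t. well_formed i k t \<longrightarrow> wins k (unary Sw t) P \<longrightarrow>
        \<sigma> P (unary Sw t) = Fin (replicate (length (lose_idx i k P)) ozero)) \<and>
    (\<forall>P t j th. well_formed i k t \<longrightarrow> i \<le> j \<longrightarrow> j \<le> k \<longrightarrow> \<not> losing i k P j \<longrightarrow>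
        \<sigma> P t = Fin th \<longrightarrow> \<sigma> P (unary (Pj j) t) = Fin (sig_win_upd i k P j th)) \<and>
    (\<forall>P t j th. well_formed i k t \<longrightarrow> losing i k P j \<longrightarrow>
        \<sigma> P t = Fin th \<longrightarrow> \<sigma> P (unary (Pj j) t) = Fin (sig_lose_upd i k P j th)) \<and>
    (\<forall>P tL tR. well_formed i k tL \<longrightarrow> well_formed i k tR \<longrightarrow>
        \<sigma> P (binary (Cp P) tL tR) = sig_min (\<sigma> P tL) (\<sigma> P tR)) \<and>
    (\<forall>P tL tR. well_formed i k tL \<longrightarrow> well_formed i k tR \<longrightarrow>
        \<sigma> P (binary (Cp (opp P)) tL tR) = sig_max (\<sigma> P tL) (\<sigma> P tR))"

text \<open>sigma'-optimal strategy.  For u controlled by P, t restricted to u is c_Q(tL,tR)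
  with Q = P if u is kept and Q = opp P if u is switched.\<close>
definition optimal :: "(player \<Rightarrow> tree \<Rightarrow> 'o::linorder sig) \<Rightarrow> tree \<Rightarrow> player \<Rightarrow> nat list set \<Rightarrow> bool" where
  "optimal \<sigma> t P S \<longleftrightarrow>
    (\<forall>u\<in>S. controlled t P u \<longrightarrow>
      (let Q = (if switched t u then opp P else P);
           sL = \<sigma> Q (subtree t (u @ [0])); sR = \<sigma> Q (subtree t (u @ [1]))
       in (u @ [0] \<in> S \<longrightarrow> sig_le sL sR) \<and> (u @ [1] \<in> S \<longrightarrow> sig_le sR sL)))"

end

theory Submission
  imports Defs
begin

text \<open>Let P always move from a controlled node u to a child whose signature, for the player
  owning the letter at u, is lexicographically least. Signatures of well-formed trees are
  tuples of one common length, so lex is total on them and such a child exists; the nodes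
  reachable under this choice form a strategy, which is optimal by construction.\<close>

lemma bnode_Suc: "bnode d (Suc n) = bnode d n @ [d n]"
  by (simp add: bnode_def)

lemma bnode_prepend:
  fixes v :: "nat list" and d :: "nat \<Rightarrow> nat"
  defines "d' \<equiv> (\<lambda>n. if n < length v then v ! n else d (n - length v))"
  shows "bnode d' n = (if n \<le> length v then take n v else v @ bnode d (n - length v))"
proof (induction n)
  case 0
  then show ?case by (simp add: bnode_def)
next
  case (Suc n)
  consider "Suc n \<le> length v" | "n = length v" | "length v < n" by linarith
  then show ?case
  proof cases
    case 1
    then show ?thesis using Suc by (simp add: bnode_Suc d'_def take_Suc_conv_app_nth)
  next
    case 2
    then show ?thesis using Suc by (simp add: bnode_Suc d'_def bnode_def)
  next
    case 3
    then have "Suc n - length v = Suc (n - length v)" by simp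
    then show ?thesis using Suc 3 by (simp add: bnode_Suc d'_def)
  qed
qed

lemma is_tree_subtree:
  assumes "is_tree i k t" and "t v \<noteq> None"
  shows "is_tree i k (subtree t v)"
  using assms unfolding is_tree_def subtree_def
  by (metis append.assoc append_Nil2)

lemma finite_Sw_subtree_branch:
  assumes wf: "well_formed i k t" and tv: "t v \<noteq> None"
    and br: "is_branch (subtree t v) d"
  shows "finite {n. subtree t v (bnode d n) = Some Sw}"
proof -
  define d' where "d' \<equiv> (\<lambda>n. if n < length v then v ! n else d (n - length v))"
  have bn: "bnode d' n = (if n \<le> length v then take n v else v @ bnode d (n - length v))" for n
    unfolding d'_def by (rule bnode_prepend)
  have pre: "\<And>u w. t (u @ w) \<noteq> None \<Longrightarrow> t u \<noteq> None"
    using wf unfolding well_formed_def is_tree_def by blast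
  have "is_branch t d'"
    unfolding is_branch_def
  proof
    fix n
    show "t (bnode d' n) \<noteq> None"
    proof (cases "n \<le> length v")
      case True
      then show ?thesis using bn[of n] tv pre[of "take n v" "drop n v"] by simp
    next
      case False
      then show ?thesis using bn[of n] br by (simp add: is_branch_def subtree_def)
    qed
  qed
  then have "finite {n. t (bnode d' n) = Some Sw}"
    using wf by (simp add: well_formed_def)
  moreover have "{n. subtree t v (bnode d n) = Some Sw}
      \<subseteq> (\<lambda>m. m - length v) ` {n. t (bnode d' n) = Some Sw}"
  proof
    fix n assume "n \<in> {n. subtree t v (bnode d n) = Some Sw}"
    then have "t (bnode d' (n + length v)) = Some Sw"
      using bn[of "n + length v"] by (cases n) (auto simp: subtree_def bnode_def)
    then show "n \<in> (\<lambda>m. m - length v) ` {n. t (bnode d' n) = Some Sw}"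
      by (intro image_eqI[of _ _ "n + length v"]) auto
  qed
  ultimately show ?thesis using finite_surj by blast
qed

lemma well_formed_subtree:
  assumes "well_formed i k t" and "t v \<noteq> None"
  shows "well_formed i k (subtree t v)"
  using assms is_tree_subtree[of i k t v] finite_Sw_subtree_branch[OF assms]
  unfolding well_formed_def by blast

lemma lex_less_Cons_same:
  assumes "lex_less a b"
  shows "lex_less (x # a) (x # b)"
proof -
  from assms obtain n where "n < length a" "n < length b" "take n a = take n b" "a ! n < b ! n"
    unfolding lex_less_def by blast
  then show ?thesis
    unfolding lex_less_def by (intro exI[of _ "Suc n"]) simp
qed

lemma lex_less_Cons_less: "x < y \<Longrightarrow> lex_less (x # a) (y # b)"
  unfolding lex_less_def by (intro exI[of _ 0]) simp

lemma lex_less_total: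
  fixes a b :: "'o::linorder list"
  shows "length a = length b \<Longrightarrow> a = b \<or> lex_less a b \<or> lex_less b a"
proof (induction a arbitrary: b)
  case Nil
  then show ?case by simp
next
  case (Cons x a)
  then obtain y b' where b: "b = y # b'" "length a = length b'"
    by (cases b) auto
  consider "x < y" | "y < x" | "x = y"
    using not_less_iff_gr_or_eq by blast
  then show ?case
  proof cases
    case 1
    then show ?thesis unfolding b(1) by (simp add: lex_less_Cons_less)
  next
    case 2
    then show ?thesis unfolding b(1) by (simp add: lex_less_Cons_less)
  next
    case 3
    then show ?thesis
      using Cons.IH[OF b(2)] lex_less_Cons_same[of a b' x] lex_less_Cons_same[of b' a x]
      unfolding b(1) by blast
  qed
qed

lemma sig_le_total:
  assumes "\<And>a b. x = Fin a \<Longrightarrow> y = Fin b \<Longrightarrow> length a = length b"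
  shows "sig_le x y \<or> sig_le y x"
proof (cases x; cases y)
  fix a b assume "x = Fin a" "y = Fin b"
  then show ?thesis using assms lex_less_total[of a b] by auto
qed simp_all

lemma sig_conditions_sig_le_total:
  assumes "sig_conditions i k \<sigma>" and "well_formed i k s" and "well_formed i k s'"
  shows "sig_le (\<sigma> Q s) (\<sigma> Q s') \<or> sig_le (\<sigma> Q s') (\<sigma> Q s)"
proof (rule sig_le_total)
  have len: "length th = length (lose_idx i k Q)" if "well_formed i k r" and "\<sigma> Q r = Fin th"
    for r th
    using assms(1) that unfolding sig_conditions_def by (elim conjE) blast
  fix a b assume "\<sigma> Q s = Fin a" and "\<sigma> Q s' = Fin b"
  then show "length a = length b"
    using len[OF assms(2)] len[OF assms(3)] by (simp only:)
qed

lemma controlled_children: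
  assumes "is_tree i k t" and "controlled t P u"
  shows "t (u @ [0]) \<noteq> None" and "t (u @ [1]) \<noteq> None"
proof -
  from assms(2) obtain Q where "t u = Some (Cp Q)"
    unfolding controlled_def by blast
  then show "t (u @ [0]) \<noteq> None" and "t (u @ [1]) \<noteq> None"
    using assms(1) unfolding is_tree_def by force+
qed

definition choice_strategy :: "tree \<Rightarrow> player \<Rightarrow> (nat list \<Rightarrow> nat) \<Rightarrow> nat list set" where
  "choice_strategy t P ch =
     {u. t u \<noteq> None \<and> (\<forall>m < length u. controlled t P (take m u) \<longrightarrow> u ! m = ch (take m u))}"

lemma choice_strategy_snoc:
  "u @ [n] \<in> choice_strategy t P ch \<longleftrightarrow>
     t (u @ [n]) \<noteq> None \<and> (\<forall>m < length u. controlled t P (take m u) \<longrightarrow> u ! m = ch (take m u))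
     \<and> (controlled t P u \<longrightarrow> n = ch u)"
  unfolding choice_strategy_def by (auto simp: nth_append less_Suc_eq)

lemma choice_strategy_controlled_move:
  "controlled t P u \<Longrightarrow> u @ [n] \<in> choice_strategy t P ch \<Longrightarrow> ch u = n"
  by (simp add: choice_strategy_snoc)

lemma is_strategy_choice_strategy:
  assumes tree: "is_tree i k t"
    and ch: "\<And>u. controlled t P u \<Longrightarrow> t (u @ [ch u]) \<noteq> None"
  shows "is_strategy t P (choice_strategy t P ch)"
  unfolding is_strategy_def
proof (intro conjI ballI allI impI)
  show "choice_strategy t P ch \<subseteq> {u. t u \<noteq> None}"
    by (auto simp: choice_strategy_def)
  show "[] \<in> choice_strategy t P ch"
    using tree by (simp add: choice_strategy_def is_tree_def)
next
  fix u v assume uv: "u @ v \<in> choice_strategy t P ch"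
  have "t u \<noteq> None"
    using uv tree unfolding is_tree_def choice_strategy_def by blast
  moreover have "u ! m = ch (take m u)" if "m < length u" and "controlled t P (take m u)" for m
  proof -
    have "(u @ v) ! m = ch (take m (u @ v))"
      using uv that unfolding choice_strategy_def by simp
    then show ?thesis using that by (simp add: nth_append)
  qed
  ultimately show "u \<in> choice_strategy t P ch"
    unfolding choice_strategy_def by blast
next
  fix u assume "u \<in> choice_strategy t P ch" and c: "controlled t P u"
  then have "\<forall>m < length u. controlled t P (take m u) \<longrightarrow> u ! m = ch (take m u)"
    by (simp add: choice_strategy_def)
  then show "\<exists>!n. t (u @ [n]) \<noteq> None \<and> u @ [n] \<in> choice_strategy t P ch"
    using ch[OF c] c by (intro ex1I[of _ "ch u"]) (auto simp: choice_strategy_snoc)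
next
  fix u n assume "u \<in> choice_strategy t P ch" and "\<not> controlled t P u" and "t (u @ [n]) \<noteq> None"
  then show "u @ [n] \<in> choice_strategy t P ch"
    unfolding choice_strategy_snoc by (simp add: choice_strategy_def)
qed

theorem mainTheorem16:
  fixes i k :: nat
    and \<sigma> :: "player \<Rightarrow> tree \<Rightarrow> 'o::wellorder sig"
    and t :: tree and P :: player
  assumes "i < k"
    and "\<forall>x::'o. countable {y. y < x}"
    and "uncountable (UNIV :: 'o set)"
    and "sig_conditions i k \<sigma>"
    and "well_formed i k t"
    and "\<sigma> P t \<noteq> Infty"
  shows "\<exists>S. is_strategy t P S \<and> optimal \<sigma> t P S"
proof -
  have tree: "is_tree i k t"
    using assms(5) by (simp add: well_formed_def)
  define sig where "sig u n = \<sigma> (if switched t u then opp P else P) (subtree t (u @ [n]))" for u n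
  define ch where "ch u = (if sig_le (sig u 0) (sig u 1) then 0 else 1 :: nat)" for u
  have total: "sig_le (sig u 0) (sig u 1) \<or> sig_le (sig u 1) (sig u 0)" if c: "controlled t P u" for u
    unfolding sig_def using assms(4) well_formed_subtree[OF assms(5)] controlled_children[OF tree c]
    by (intro sig_conditions_sig_le_total) blast+
  have "t (u @ [ch u]) \<noteq> None" if "controlled t P u" for u
    using controlled_children[OF tree that] unfolding ch_def
    by (cases "sig_le (sig u 0) (sig u 1)") (simp_all only: if_True if_False not_False_eq_True)
  then have "is_strategy t P (choice_strategy t P ch)"
    by (rule is_strategy_choice_strategy[OF tree])
  moreover have "optimal \<sigma> t P (choice_strategy t P ch)"
    unfolding optimal_def Let_def sig_def[symmetric]
  proof (intro ballI impI conjI)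
    fix u assume c: "controlled t P u"
    show "sig_le (sig u 0) (sig u 1)" if "u @ [0] \<in> choice_strategy t P ch"
      using choice_strategy_controlled_move[OF c that] unfolding ch_def by (simp split: if_splits)
    show "sig_le (sig u 1) (sig u 0)" if "u @ [1] \<in> choice_strategy t P ch"
    proof -
      have "\<not> sig_le (sig u 0) (sig u 1)"
        using choice_strategy_controlled_move[OF c that] unfolding ch_def
        by (metis zero_neq_one)
      then show ?thesis using total[OF c] by blast
    qed
  qed
  ultimately show ?thesis by blast
qed

end
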